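(* Let $\mathcal{H}$ be a Hilbert space of dimension $d$. Consider the two-sample quantum universal hypothesis testing problem: for unknown $\rho,\sigma\in\mathcal{D}(\mathcal{H})$ one is given $\sigma^{\otimes m}\otimes\rho^{\otimes n}$ and must test $H_0:\sigma=\rho$ against $H_1:\sigma\neq\rho$. Let $\alpha\in(0,1)$, $k=\min\{m,n\}$, and let $m,n\to\infty$ at the same rate (i.e. along pairs with $m/n$ and $n/m$ bounded). Then there exist decision rules $M$ (depending only on $m,n,\alpha,d$), using only independent measurements, such that for all sufficiently large $m,n$: whenever $\sigma=\rho$ (for any $\rho\in\mathcal{D}(\mathcal{H})$) the probability of declaring $H_1$ is at most $\alpha$; and for every fixed pair $\rho\neq\sigma$ there is a constant $K$ such that, for all sufficiently large $m,n$, the probability $\beta$ of declaring $H_0$ satisfies $$\beta\le\exp\!\left(-\frac{k\|\rho-\sigma\|_1^2}{344\,d^3}+K k^{1/2}\right).$$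
   Context: $\mathcal{D}(\mathcal{H})$ denotes the set of density operators on $\mathcal{H}$. A decision rule is a two-outcome POVM $\{E_0,E_1\}$ on $\mathcal{H}^{\otimes(m+n)}$ (outcome $0$: declare $H_0$; outcome $1$: declare $H_1$), not depending on the unknown states. "Independent measurements" means each of the $m+n$ copies is measured separately and the outcomes are classically processed. The probability of declaring $H_0$ is $\mathrm{Tr}[(\sigma^{\otimes m}\otimes\rho^{\otimes n})E_0]$. $\|X\|_1=\mathrm{Tr}\sqrt{X^\dagger X}$ is the trace norm. *)

theory Defs
  imports "Jordan_Normal_Form.Schur_Decomposition" "Jordan_Normal_Form.Char_Poly"
    "HOL-Library.FuncSet"
begin

(* Matrices over C^d represent operators on the d-dimensional Hilbert space H. *)

definition hermitian_mat :: "nat \<Rightarrow> complex mat \<Rightarrow> bool" where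
  "hermitian_mat d A \<longleftrightarrow> A \<in> carrier_mat d d \<and> mat_adjoint A = A"

definition psd_mat :: "nat \<Rightarrow> complex mat \<Rightarrow> bool" where
  "psd_mat d A \<longleftrightarrow> hermitian_mat d A \<and>
     (\<forall>v \<in> carrier_vec d. 0 \<le> Re ((A *\<^sub>v v) \<bullet>c v))"

definition trace :: "complex mat \<Rightarrow> complex" where
  "trace A = (\<Sum>i<dim_row A. A $$ (i, i))"

definition density_op :: "nat \<Rightarrow> complex mat \<Rightarrow> bool" where
  "density_op d A \<longleftrightarrow> psd_mat d A \<and> trace A = 1"

definition povm :: "nat \<Rightarrow> complex mat list \<Rightarrow> bool" where
  "povm d F \<longleftrightarrow> F \<noteq> [] \<and> (\<forall>E \<in> set F. psd_mat d E) \<and>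
     foldr (+) F (0\<^sub>m d d) = 1\<^sub>m d"

(* Trace norm ||X||_1 = Tr sqrt(X^dagger X) = sum of the square roots of the
   eigenvalues (with multiplicity) of X^dagger X. *)
definition trace_norm :: "complex mat \<Rightarrow> real" where
  "trace_norm X = sum_mset (image_mset (\<lambda>e. sqrt (cmod e))
                    (proots (char_poly (mat_adjoint X * X))))"

(* A decision rule using only independent measurements on N = m+n copies:
   copy i is measured with the POVM P i (outcome x i < length (P i)); the
   outcome string x is classically (possibly randomly) processed: g x is the
   probability of declaring H0.  Corresponding POVM element:
   E0 = sum_x g x * (P 0 ! x 0 (x) ... (x) P (N-1) ! x (N-1)). *)
type_synonym indep_rule = "(nat \<Rightarrow> complex mat list) \<times> ((nat \<Rightarrow> nat) \<Rightarrow> real)"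

definition outcomes :: "nat \<Rightarrow> (nat \<Rightarrow> complex mat list) \<Rightarrow> (nat \<Rightarrow> nat) set" where
  "outcomes N P = Pi\<^sub>E {..<N} (\<lambda>i. {..<length (P i)})"

definition valid_indep_rule :: "nat \<Rightarrow> nat \<Rightarrow> indep_rule \<Rightarrow> bool" where
  "valid_indep_rule d N M \<longleftrightarrow>
     (\<forall>i<N. povm d (fst M i)) \<and> (\<forall>x \<in> outcomes N (fst M). 0 \<le> snd M x \<and> snd M x \<le> 1)"

definition copy_state :: "nat \<Rightarrow> complex mat \<Rightarrow> complex mat \<Rightarrow> nat \<Rightarrow> complex mat" where
  "copy_state m \<sigma> \<rho> i = (if i < m then \<sigma> else \<rho>)"

(* probability of outcome string x: Tr[(sigma^m (x) rho^n)(P 0!x 0 (x) ...)] *)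
definition outcome_prob :: "nat \<Rightarrow> nat \<Rightarrow> indep_rule \<Rightarrow> complex mat \<Rightarrow> complex mat \<Rightarrow> (nat \<Rightarrow> nat) \<Rightarrow> real" where
  "outcome_prob m n M \<sigma> \<rho> x =
     (\<Prod>i<m+n. Re (trace (copy_state m \<sigma> \<rho> i * (fst M i ! x i))))"

definition prob_H0 :: "nat \<Rightarrow> nat \<Rightarrow> indep_rule \<Rightarrow> complex mat \<Rightarrow> complex mat \<Rightarrow> real" where
  "prob_H0 m n M \<sigma> \<rho> =
     (\<Sum>x \<in> outcomes (m+n) (fst M). snd M x * outcome_prob m n M \<sigma> \<rho> x)"

definition prob_H1 :: "nat \<Rightarrow> nat \<Rightarrow> indep_rule \<Rightarrow> complex mat \<Rightarrow> complex mat \<Rightarrow> real" where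
  "prob_H1 m n M \<sigma> \<rho> =
     (\<Sum>x \<in> outcomes (m+n) (fst M). (1 - snd M x) * outcome_prob m n M \<sigma> \<rho> x)"

end

theory Submission
  imports Defs "HOL-Probability.Hoeffding"
begin

(* Every copy is measured with the same POVM {F_t}, t < 4d^2, where F_t = w w^* / (8d) and w runs
   over the vectors e_i + i^c e_j (i, j < d, c < 4). For Hermitian Y the four phases give
   sum_c |Tr (Y F_(i,j,c))| >= |Y_ij| / (2d), so the outcome distributions p_sigma, p_rho are at
   l1-distance at least |sigma - rho|_l1 / (2d), with |.|_l1 the entrywise l1 norm, and some set S
   of outcomes has |p_sigma S - p_rho S| >= Delta := |sigma - rho|_l1 / (4d).
   The test declares H0 iff for every set S of outcomes the empirical frequencies of S in the two
   samples differ by at most sqrt (ln (2^(4d^2+1) / alpha) / k). Hoeffding's inequality and a union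
   bound over the 2^(4d^2) sets bound the type I error by alpha. For the type II error, Hoeffding's
   inequality for the separating set S gives exp (- k Delta^2 + O(sqrt k)), and
   ||rho - sigma||_1^2 <= d |rho - sigma|_l1^2 = 16 d^3 Delta^2 turns this into the stated exponent. *)

no_notation vec_nth (infixl "$" 90)

section \<open>Trace norm and the entrywise l1 norm\<close>

lemma index_mult_mat_vec_sum:
  assumes "M \<in> carrier_mat d d" "v \<in> carrier_vec d" "a < d"
  shows "(M *\<^sub>v v) $ a = (\<Sum>b<d. M $$ (a,b) * v $ b)"
  using assms by (simp add: scalar_prod_def atLeast0LessThan)

lemma trace_mult_eq_sum:
  assumes "A \<in> carrier_mat d k" "B \<in> carrier_mat k d"
  shows "Defs.trace (A * B) = (\<Sum>a<d. \<Sum>b<k. A $$ (a,b) * B $$ (b,a))"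
  using assms by (auto simp: Defs.trace_def scalar_prod_def atLeast0LessThan intro!: sum.cong)

lemma trace_mult_comm:
  assumes "A \<in> carrier_mat d k" "B \<in> carrier_mat k d"
  shows "Defs.trace (A * B) = Defs.trace (B * A)"
  unfolding trace_mult_eq_sum[OF assms] trace_mult_eq_sum[OF assms(2,1)]
  by (subst sum.swap) (simp add: mult.commute)

lemma trace_minus_mult:
  assumes "A \<in> carrier_mat d k" "B \<in> carrier_mat d k" "C \<in> carrier_mat k d"
  shows "Defs.trace ((A - B) * C) = Defs.trace (A * C) - Defs.trace (B * C)"
proof -
  have "(A - B) * C = A * C - B * C"
    using assms by (rule minus_mult_distrib_mat)
  then show ?thesis
    using assms by (simp add: Defs.trace_def sum_subtractf)
qed

lemma dim_mat_adjoint [simp]: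
  "dim_row (mat_adjoint A) = dim_col A" "dim_col (mat_adjoint A) = dim_row A"
  unfolding mat_adjoint_def by simp_all

lemma index_mat_adjoint [simp]:
  "i < dim_col A \<Longrightarrow> j < dim_row A \<Longrightarrow> mat_adjoint A $$ (i,j) = cnj (A $$ (j,i))"
  unfolding mat_adjoint_def by (simp add: mat_of_rows_def)

lemma mat_adjoint_carrier_mat [simp]: "A \<in> carrier_mat n n \<Longrightarrow> mat_adjoint A \<in> carrier_mat n n"
  by (metis carrier_matD carrier_matI dim_mat_adjoint)

lemma cscalar_prod_mat_adjoint:
  fixes X :: "complex mat"
  assumes X: "X \<in> carrier_mat d d" and w: "w \<in> carrier_vec d" and v: "v \<in> carrier_vec d"
  shows "(mat_adjoint X *\<^sub>v w) \<bullet>c v = w \<bullet>c (X *\<^sub>v v)"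
proof -
  have "(mat_adjoint X *\<^sub>v w) \<bullet>c v = (\<Sum>a<d. \<Sum>k<d. cnj (X $$ (k,a)) * w $ k * cnj (v $ a))"
    using X w v by (simp add: scalar_prod_def atLeast0LessThan sum_distrib_right)
  also have "\<dots> = (\<Sum>k<d. w $ k * cnj (\<Sum>a<d. X $$ (k,a) * v $ a))"
    by (subst sum.swap) (simp add: sum_distrib_left mult_ac)
  also have "\<dots> = w \<bullet>c (X *\<^sub>v v)"
    using X w v by (simp add: scalar_prod_def atLeast0LessThan)
  finally show ?thesis .
qed

lemma hermitian_mat_minus:
  assumes "hermitian_mat d A" "hermitian_mat d B"
  shows "hermitian_mat d (A - B)"
proof -
  have A: "A \<in> carrier_mat d d" "mat_adjoint A = A" and B: "B \<in> carrier_mat d d" "mat_adjoint B = B"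
    using assms by (auto simp: hermitian_mat_def)
  have "mat_adjoint (A - B) = A - B"
  proof (rule eq_matI)
    fix i j assume "i < dim_row (A - B)" "j < dim_col (A - B)"
    then have ij: "i < d" "j < d"
      using A B by auto
    have "A $$ (i,j) = cnj (A $$ (j,i))" "B $$ (i,j) = cnj (B $$ (j,i))"
      using A B ij index_mat_adjoint[of i A j] index_mat_adjoint[of i B j] by auto
    then show "mat_adjoint (A - B) $$ (i,j) = (A - B) $$ (i,j)"
      using A B ij by simp
  qed (use A B in auto)
  then show ?thesis
    using A B by (simp add: hermitian_mat_def minus_carrier_mat)
qed

lemma density_op_carrier_mat: "density_op d \<sigma> \<Longrightarrow> \<sigma> \<in> carrier_mat d d"
  by (simp add: density_op_def psd_mat_def hermitian_mat_def)

(* 0 <= e refers to the order of HOL-Library.Complex_Order: e is real and nonnegative. *)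
lemma eigenvalue_adjoint_mult_nonneg:
  fixes X :: "complex mat"
  assumes X: "X \<in> carrier_mat d d" and e: "eigenvalue (mat_adjoint X * X) e"
  shows "0 \<le> e"
proof -
  obtain v where v: "v \<in> carrier_vec d" "v \<noteq> 0\<^sub>v d" and ev: "(mat_adjoint X * X) *\<^sub>v v = e \<cdot>\<^sub>v v"
    using e X unfolding eigenvalue_def eigenvector_def by auto
  define p where "p = v \<bullet>c v"
  define q where "q = (X *\<^sub>v v) \<bullet>c (X *\<^sub>v v)"
  have "e * p = ((mat_adjoint X * X) *\<^sub>v v) \<bullet>c v"
    unfolding ev p_def using v by simp
  also have "\<dots> = (mat_adjoint X *\<^sub>v (X *\<^sub>v v)) \<bullet>c v"
    using X v by (subst assoc_mult_mat_vec[of _ d d _ d]) auto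
  also have "\<dots> = q"
    unfolding q_def using X v by (intro cscalar_prod_mat_adjoint) auto
  finally have epq: "e * p = q" .
  have "0 \<le> q" unfolding q_def by (rule conjugate_square_ge_0_vec)
  moreover have "0 < p"
    using v conjugate_square_ge_0_vec[of v] conjugate_square_eq_0_vec[OF v(1)]
    unfolding p_def by (simp add: order_less_le)
  ultimately have "Im e * Re p = 0" "0 \<le> Re e * Re p" "0 < Re p"
    using arg_cong[OF epq, of Re] arg_cong[OF epq, of Im]
    by (auto simp: less_eq_complex_def less_complex_def)
  then show ?thesis
    by (auto simp: less_eq_complex_def zero_le_mult_iff)
qed

lemma trace_eq_sum_list_eigenvalues:
  fixes A :: "complex mat"
  assumes A: "A \<in> carrier_mat d d" and cp: "char_poly A = (\<Prod>e\<leftarrow>es. [:- e, 1:])"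
  shows "Defs.trace A = sum_list es"
proof -
  obtain B P Q where "schur_decomposition A es = (B, P, Q)"
    by (cases "schur_decomposition A es") auto
  with schur_decomposition[OF A cp] A
  have B: "B \<in> carrier_mat d d" "P \<in> carrier_mat d d" "Q \<in> carrier_mat d d"
    and QP: "Q * P = 1\<^sub>m d" and A_eq: "A = P * B * Q" and es: "es = diag_mat B"
    unfolding similar_mat_wit_def Let_def by auto
  have "Defs.trace A = Defs.trace (Q * (P * B))"
    unfolding A_eq using B by (intro trace_mult_comm[of _ d d]) auto
  also have "Q * (P * B) = B"
    using B QP by (simp flip: assoc_mult_mat[of Q d d P d B d])
  finally show ?thesis
    using B by (simp add: es diag_mat_def Defs.trace_def sum_list_sum_nth atLeast0LessThan)
qed

lemma trace_adjoint_mult: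
  fixes X :: "complex mat"
  assumes X: "X \<in> carrier_mat d d"
  shows "Defs.trace (mat_adjoint X * X) = of_real (\<Sum>a<d. \<Sum>b<d. (cmod (X $$ (a,b)))\<^sup>2)"
proof -
  have "Defs.trace (mat_adjoint X * X) = (\<Sum>b<d. \<Sum>a<d. X $$ (a,b) * cnj (X $$ (a,b)))"
    using X by (simp add: trace_mult_eq_sum[of _ d d] mult.commute)
  also have "\<dots> = (\<Sum>a<d. \<Sum>b<d. X $$ (a,b) * cnj (X $$ (a,b)))"
    by (rule sum.swap)
  finally show ?thesis
    by (simp only: of_real_sum complex_norm_square)
qed

lemma proots_prod_linear_factors:
  "proots (\<Prod>e\<leftarrow>es. [:- e, 1:]) = mset (es :: 'a :: idom list)"
proof (induction es)
  case (Cons e es)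
  have "(\<Prod>e\<leftarrow>es. [:- e, 1:]) \<noteq> (0 :: 'a poly)"
    by (auto simp: prod_list_zero_iff)
  with Cons show ?case
    by (simp add: proots_mult del: mult_pCons_left)
qed simp

lemma sum_list_sqrt_le:
  assumes "\<And>x. x \<in> set xs \<Longrightarrow> 0 \<le> x"
  shows "(\<Sum>x\<leftarrow>xs. sqrt x) \<le> sqrt (real (length xs) * sum_list xs)"
proof -
  let ?n = "length xs"
  have "(\<Sum>i<?n. 1 * sqrt (xs ! i))\<^sup>2 \<le> (\<Sum>i<?n. 1\<^sup>2) * (\<Sum>i<?n. (sqrt (xs ! i))\<^sup>2)"
    by (rule Cauchy_Schwarz_ineq_sum)
  also have "(\<Sum>i<?n. (sqrt (xs ! i))\<^sup>2) = (\<Sum>i<?n. xs ! i)"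
    using assms by (intro sum.cong) auto
  finally show ?thesis
    by (simp add: sum_list_sum_nth atLeast0LessThan real_le_rsqrt)
qed

(* The eigenvalues of X^* X are nonnegative and sum to its trace, the squared Frobenius norm of X;
   conclude by Cauchy-Schwarz. *)
lemma trace_norm_le_sqrt_frobenius:
  fixes X :: "complex mat"
  assumes X: "X \<in> carrier_mat d d"
  shows "trace_norm X \<le> sqrt (real d * (\<Sum>a<d. \<Sum>b<d. (cmod (X $$ (a,b)))\<^sup>2))"
proof -
  let ?A = "mat_adjoint X * X"
  have A: "?A \<in> carrier_mat d d" using X by auto
  obtain es where cp: "char_poly ?A = (\<Prod>e\<leftarrow>es. [:- e, 1:])" and len: "length es = d"
    using char_poly_factorized[OF A] by blast
  have "0 \<le> e" if "e \<in> set es" for e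
  proof (rule eigenvalue_adjoint_mult_nonneg[OF X])
    have "poly (char_poly ?A) e = 0"
      using that unfolding cp by (simp add: poly_prod_list prod_list_zero_iff)
    then show "eigenvalue ?A e" using eigenvalue_root_char_poly[OF A] by simp
  qed
  then have Re_es: "cmod e = Re e" "0 \<le> Re e" if "e \<in> set es" for e
    using that by (auto simp: less_eq_complex_def cmod_eq_Re)
  have "trace_norm X = (\<Sum>e\<leftarrow>es. sqrt (cmod e))"
    unfolding trace_norm_def cp proots_prod_linear_factors by (metis mset_map sum_mset_sum_list)
  also have "\<dots> = (\<Sum>x\<leftarrow>map Re es. sqrt x)"
    by (simp add: o_def Re_es cong: map_cong)
  also have "\<dots> \<le> sqrt (real d * sum_list (map Re es))"
    using sum_list_sqrt_le[of "map Re es"] Re_es len by auto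
  also have "sum_list (map Re es) = Re (Defs.trace ?A)"
    unfolding trace_eq_sum_list_eigenvalues[OF A cp] by (induction es) auto
  finally show ?thesis
    using trace_adjoint_mult[OF X] by simp
qed

lemma trace_norm_nonneg: "0 \<le> trace_norm X"
proof -
  have "0 \<le> sum_mset (image_mset (\<lambda>e. sqrt (cmod e)) M)" for M :: "complex multiset"
    by (induction M) auto
  then show ?thesis
    unfolding trace_norm_def .
qed

lemma sum_power2_le_power2_sum:
  fixes f :: "'a \<Rightarrow> real"
  assumes "finite A" "\<And>x. x \<in> A \<Longrightarrow> 0 \<le> f x"
  shows "(\<Sum>x\<in>A. (f x)\<^sup>2) \<le> (\<Sum>x\<in>A. f x)\<^sup>2"
proof -
  have "(\<Sum>x\<in>A. (f x)\<^sup>2) \<le> (\<Sum>x\<in>A. f x * sum f A)"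
    using assms by (intro sum_mono) (auto simp: power2_eq_square intro: mult_left_mono member_le_sum)
  also have "\<dots> = (\<Sum>x\<in>A. f x)\<^sup>2"
    by (simp add: power2_eq_square sum_distrib_right)
  finally show ?thesis .
qed

definition entrywise_l1 :: "complex mat \<Rightarrow> real" where
  "entrywise_l1 X = (\<Sum>a<dim_row X. \<Sum>b<dim_col X. cmod (X $$ (a,b)))"

lemma entrywise_l1_nonneg: "0 \<le> entrywise_l1 X"
  by (simp add: entrywise_l1_def sum_nonneg)

lemma entrywise_l1_minus_commute:
  assumes "A \<in> carrier_mat d d" "B \<in> carrier_mat d d"
  shows "entrywise_l1 (A - B) = entrywise_l1 (B - A)"
  using assms by (simp add: entrywise_l1_def norm_minus_commute)

lemma trace_norm_power2_le_entrywise_l1: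
  fixes X :: "complex mat"
  assumes X: "X \<in> carrier_mat d d"
  shows "(trace_norm X)\<^sup>2 \<le> real d * (entrywise_l1 X)\<^sup>2"
proof -
  let ?F = "\<Sum>a<d. \<Sum>b<d. (cmod (X $$ (a,b)))\<^sup>2"
  have "(trace_norm X)\<^sup>2 \<le> (sqrt (real d * ?F))\<^sup>2"
    using trace_norm_le_sqrt_frobenius[OF X] trace_norm_nonneg by (rule power_mono)
  also have "\<dots> = real d * ?F"
    by (simp add: sum_nonneg)
  also have "\<dots> \<le> real d * (entrywise_l1 X)\<^sup>2"
    using X sum_power2_le_power2_sum[of "{..<d} \<times> {..<d}" "\<lambda>(a,b). cmod (X $$ (a,b))"]
    by (intro mult_left_mono) (simp_all add: entrywise_l1_def sum.cartesian_product case_prod_beta)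
  finally show ?thesis .
qed

section \<open>An informationally complete measurement\<close>

definition probe_index :: "nat \<Rightarrow> nat \<Rightarrow> nat \<Rightarrow> nat \<Rightarrow> nat" where
  "probe_index d i j c = c + (j + i * d) * 4"

(* Outcome probe_index d i j c corresponds to the vector e_i + i^c e_j. *)
definition probe_vec :: "nat \<Rightarrow> nat \<Rightarrow> complex Matrix.vec" where
  "probe_vec d t = Matrix.vec d (\<lambda>a. (if a = t div 4 div d then 1 else 0)
                                     + (if a = t div 4 mod d then \<i> ^ (t mod 4) else 0))"

definition probe_op :: "nat \<Rightarrow> nat \<Rightarrow> complex mat" where
  "probe_op d t = Matrix.mat d d (\<lambda>(a,b). probe_vec d t $ a * cnj (probe_vec d t $ b) / of_nat (8 * d))"

lemma probe_vec_carrier_vec [simp]: "probe_vec d t \<in> carrier_vec d"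
  by (simp add: probe_vec_def)

lemma dim_probe_vec [simp]: "dim_vec (probe_vec d t) = d"
  by (simp add: probe_vec_def)

lemma probe_op_carrier_mat [simp]: "probe_op d t \<in> carrier_mat d d"
  by (simp add: probe_op_def)

lemma dim_probe_op [simp]: "dim_row (probe_op d t) = d" "dim_col (probe_op d t) = d"
  by (simp_all add: probe_op_def)

lemma index_probe_op:
  "a < d \<Longrightarrow> b < d \<Longrightarrow> probe_op d t $$ (a,b) = probe_vec d t $ a * cnj (probe_vec d t $ b) / of_nat (8 * d)"
  by (simp add: probe_op_def)

lemma sum_probe_index:
  "(\<Sum>t<d*d*4. h t) = (\<Sum>i<d. \<Sum>j<d. \<Sum>c<4. h (probe_index d i j c))"
  by (simp add: sum_mult_product probe_index_def)

lemma probe_vec_probe_index: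
  assumes "j < d" "c < 4" "a < d"
  shows "probe_vec d (probe_index d i j c) $ a = (if a = i then 1 else 0) + (if a = j then \<i> ^ c else 0)"
proof -
  have "(c + (j + i * d) * 4) div 4 = j + i * d" "(c + (j + i * d) * 4) mod 4 = c"
    using assms by (simp, simp only: mod_mult_self1 mod_less)
  moreover have "(j + i * d) div d = i" "(j + i * d) mod d = j"
    using assms by simp_all
  ultimately show ?thesis
    using assms by (simp add: probe_vec_def probe_index_def)
qed

lemma sum_i_powers_mult:
  "(\<Sum>c<4. (x + y * \<i> ^ c) * (u + v * cnj (\<i> ^ c))) = 4 * (x * u + y * v)"
  by (simp add: eval_nat_numeral algebra_simps)

lemma sum_probe_op:
  assumes "a < d" "b < d"
  shows "(\<Sum>t<d*d*4. probe_op d t $$ (a,b)) = (if a = b then 1 else 0)"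
proof -
  let ?\<delta> = "\<lambda>x y. if x = y then 1 else (0::complex)"
  have "(\<Sum>t<d*d*4. probe_op d t $$ (a,b)) = (\<Sum>i<d. \<Sum>j<d. \<Sum>c<4.
      (?\<delta> a i + ?\<delta> a j * \<i> ^ c) * (?\<delta> b i + ?\<delta> b j * cnj (\<i> ^ c)) / of_nat (8 * d))"
    unfolding sum_probe_index using assms
    by (intro sum.cong refl) (simp add: index_probe_op probe_vec_probe_index)
  also have "\<dots> = (\<Sum>i<d. \<Sum>j<d. 4 * (?\<delta> a i * ?\<delta> b i + ?\<delta> a j * ?\<delta> b j) / of_nat (8 * d))"
    by (simp only: sum_i_powers_mult flip: sum_divide_distrib)
  also have "\<dots> = (if a = b then 1 else 0)"
  proof -
    have "?\<delta> a i * ?\<delta> b i = (if a = b then ?\<delta> a i else 0)" for i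
      by auto
    then show ?thesis
      using assms by (simp add: sum.distrib sum.delta' flip: sum_divide_distrib sum_distrib_left)
  qed
  finally show ?thesis .
qed

lemma trace_mult_probe_op:
  assumes Y: "Y \<in> carrier_mat d d"
  shows "Defs.trace (Y * probe_op d t) = ((Y *\<^sub>v probe_vec d t) \<bullet>c probe_vec d t) / of_nat (8 * d)"
proof -
  have "Defs.trace (Y * probe_op d t) = (\<Sum>a<d. \<Sum>b<d. Y $$ (a,b) * probe_vec d t $ b * cnj (probe_vec d t $ a) / of_nat (8 * d))"
    using Y by (auto simp: trace_mult_eq_sum[of _ d d] index_probe_op intro!: sum.cong)
  also have "\<dots> = ((Y *\<^sub>v probe_vec d t) \<bullet>c probe_vec d t) / of_nat (8 * d)"
    using Y by (simp add: scalar_prod_def atLeast0LessThan sum_divide_distrib sum_distrib_right index_mult_mat_vec_sum)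
  finally show ?thesis .
qed

lemma cscalar_prod_probe_op:
  assumes v: "v \<in> carrier_vec d"
  shows "(probe_op d t *\<^sub>v v) \<bullet>c v = (v \<bullet>c probe_vec d t) * cnj (v \<bullet>c probe_vec d t) / of_nat (8 * d)"
proof -
  let ?w = "probe_vec d t"
  have "(probe_op d t *\<^sub>v v) \<bullet>c v = (\<Sum>a<d. \<Sum>b<d. (v $ b * cnj (?w $ b)) * cnj (v $ a * cnj (?w $ a)) / of_nat (8 * d))"
    using v by (auto simp: scalar_prod_def atLeast0LessThan index_probe_op sum_distrib_left sum_divide_distrib mult_ac intro!: sum.cong)
  also have "\<dots> = (v \<bullet>c ?w) * cnj (v \<bullet>c ?w) / of_nat (8 * d)"
    using v by (simp add: scalar_prod_def atLeast0LessThan cnj_sum sum_product sum_divide_distrib)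
      (rule sum.swap)
  finally show ?thesis .
qed

lemma psd_probe_op: "psd_mat d (probe_op d t)"
proof -
  have "mat_adjoint (probe_op d t) = probe_op d t"
    by (rule eq_matI) (auto simp: index_probe_op)
  moreover have "0 \<le> Re ((probe_op d t *\<^sub>v v) \<bullet>c v)" if "v \<in> carrier_vec d" for v
    unfolding cscalar_prod_probe_op[OF that] by (simp flip: complex_norm_square)
  ultimately show ?thesis
    by (simp add: psd_mat_def hermitian_mat_def)
qed

lemma trace_mult_probe_op_nonneg:
  assumes "psd_mat d S"
  shows "0 \<le> Re (Defs.trace (S * probe_op d t))"
  using assms by (simp add: psd_mat_def hermitian_mat_def trace_mult_probe_op Re_divide_of_nat)

lemma sum_trace_mult_probe_op:
  assumes S: "S \<in> carrier_mat d d"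
  shows "(\<Sum>t<d*d*4. Defs.trace (S * probe_op d t)) = Defs.trace S"
proof -
  have "(\<Sum>t<d*d*4. Defs.trace (S * probe_op d t)) = (\<Sum>a<d. \<Sum>b<d. S $$ (a,b) * (\<Sum>t<d*d*4. probe_op d t $$ (b,a)))"
    using S by (simp add: trace_mult_eq_sum[of _ d d] sum_distrib_left sum.swap[of _ "{..<d*d*4}"])
  also have "\<dots> = (\<Sum>a<d. S $$ (a,a))"
    by (simp add: sum_probe_op if_distrib sum.delta cong: if_cong)
  finally show ?thesis
    using S by (simp add: Defs.trace_def)
qed

definition probe_povm :: "nat \<Rightarrow> complex mat list" where
  "probe_povm d = map (probe_op d) [0..<d*d*4]"

lemma length_probe_povm [simp]: "length (probe_povm d) = d*d*4"
  by (simp add: probe_povm_def)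

lemma foldr_add_mat:
  assumes "\<forall>M\<in>set Ms. M \<in> carrier_mat d d"
  shows "foldr (+) Ms (0\<^sub>m d d) \<in> carrier_mat d d \<and>
     (\<forall>a<d. \<forall>b<d. foldr (+) Ms (0\<^sub>m d d) $$ (a,b) = (\<Sum>M\<leftarrow>Ms. M $$ (a,b)))"
  using assms by (induction Ms) auto

lemma povm_probe_povm:
  assumes "1 \<le> d"
  shows "povm d (probe_povm d)"
proof -
  have car: "\<forall>M\<in>set (probe_povm d). M \<in> carrier_mat d d"
    by (auto simp: probe_povm_def)
  note sum_entries = foldr_add_mat[OF car]
  have "foldr (+) (probe_povm d) (0\<^sub>m d d) = 1\<^sub>m d"
  proof (rule eq_matI)
    fix a b assume "a < dim_row (1\<^sub>m d)" "b < dim_col (1\<^sub>m d)"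
    then have ab: "a < d" "b < d" by auto
    then have "foldr (+) (probe_povm d) (0\<^sub>m d d) $$ (a,b) = (\<Sum>t<d*d*4. probe_op d t $$ (a,b))"
      using sum_entries by (simp add: probe_povm_def o_def interv_sum_list_conv_sum_set_nat atLeast0LessThan)
    then show "foldr (+) (probe_povm d) (0\<^sub>m d d) $$ (a,b) = 1\<^sub>m d $$ (a,b)"
      using ab by (simp add: sum_probe_op)
  qed (use sum_entries in auto)
  moreover have "probe_povm d \<noteq> []"
    using assms by (simp add: probe_povm_def)
  ultimately show ?thesis
    by (auto simp: povm_def probe_povm_def psd_probe_op)
qed

section \<open>Separation of the outcome distributions\<close>

lemma sum_mult_two_point:
  fixes f :: "nat \<Rightarrow> complex"
  assumes "i < d" "j < d"
  shows "(\<Sum>b<d. f b * ((if b = i then 1 else 0) + (if b = j then p else 0))) = f i + f j * p"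
proof -
  have "f b * ((if b = i then 1 else 0) + (if b = j then p else 0))
      = (if b = i then f b else 0) + (if b = j then f b * p else 0)" for b
    by (simp add: distrib_left)
  then show ?thesis
    using assms by (simp add: sum.distrib)
qed

lemma trace_mult_probe_op_probe_index:
  assumes Y: "Y \<in> carrier_mat d d" and ij: "i < d" "j < d" and c: "c < 4"
  shows "Defs.trace (Y * probe_op d (probe_index d i j c))
       = (Y $$ (i,i) + \<i> ^ c * Y $$ (i,j) + cnj (\<i> ^ c) * Y $$ (j,i) + Y $$ (j,j)) / of_nat (8 * d)"
proof -
  let ?w = "probe_vec d (probe_index d i j c)"
  have cnj_two_point: "cnj ((if a = i then 1 else 0) + (if a = j then p else 0))
      = (if a = i then 1 else 0) + (if a = j then cnj p else 0)" for a p
    by simp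
  have "(Y *\<^sub>v ?w) \<bullet>c ?w = (\<Sum>a<d. (Y $$ (a,i) + Y $$ (a,j) * \<i> ^ c)
                                  * ((if a = i then 1 else 0) + (if a = j then cnj (\<i> ^ c) else 0)))"
    using Y ij c
    by (auto simp: scalar_prod_def atLeast0LessThan index_mult_mat_vec_sum probe_vec_probe_index
        sum_mult_two_point simp flip: cnj_two_point intro!: sum.cong)
  also have "\<dots> = Y $$ (i,i) + Y $$ (i,j) * \<i> ^ c + (Y $$ (j,i) + Y $$ (j,j) * \<i> ^ c) * cnj (\<i> ^ c)"
    by (rule sum_mult_two_point[OF ij])
  also have "\<dots> = Y $$ (i,i) + \<i> ^ c * Y $$ (i,j) + cnj (\<i> ^ c) * Y $$ (j,i) + Y $$ (j,j)"
  proof -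
    have "\<i> ^ c * cnj (\<i> ^ c) = 1"
      by (simp only: complex_norm_square[symmetric]) (simp add: norm_power)
    then show ?thesis
      by (simp add: algebra_simps)
  qed
  finally show ?thesis
    using Y by (simp add: trace_mult_probe_op)
qed

lemma sum_abs_Re_trace_probe_op_ge:
  assumes Y: "hermitian_mat d Y" and ij: "i < d" "j < d"
  shows "cmod (Y $$ (i,j)) / (2 * d) \<le> (\<Sum>c<4. \<bar>Re (Defs.trace (Y * probe_op d (probe_index d i j c)))\<bar>)"
proof -
  \<comment> \<open>The phases 1 and -1 detect the real part of Y_ij, the phases i and -i its imaginary part.\<close>
  define y where "y = Y $$ (i,j)"
  define u where "u = Re (Y $$ (i,i) + Y $$ (j,j))"
  have YC: "Y \<in> carrier_mat d d" and Yji: "Y $$ (j,i) = cnj y"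
    using Y ij index_mat_adjoint[of j Y i] unfolding hermitian_mat_def y_def by auto
  have Re_sum: "Re ((a + p * y + cnj p * cnj y + b) / of_nat (8 * d)) = (Re (a + b) + 2 * Re (p * y)) / (8 * d)"
    for a b p
    by (simp add: Re_divide_of_nat)
  have Re_trace: "Re (Defs.trace (Y * probe_op d (probe_index d i j c))) = (u + 2 * Re (\<i> ^ c * y)) / (8 * d)"
    if "c < 4" for c
    unfolding trace_mult_probe_op_probe_index[OF YC ij that] Yji y_def[symmetric] Re_sum u_def ..
  have "(\<Sum>c<4. \<bar>Re (Defs.trace (Y * probe_op d (probe_index d i j c)))\<bar>)
      = (\<Sum>c<4. \<bar>u + 2 * Re (\<i> ^ c * y)\<bar>) / (8 * d)"
    by (simp add: Re_trace abs_divide sum_divide_distrib)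
  also have "(\<Sum>c<4. \<bar>u + 2 * Re (\<i> ^ c * y)\<bar>)
      = \<bar>u + 2 * Re y\<bar> + \<bar>u - 2 * Im y\<bar> + \<bar>u - 2 * Re y\<bar> + \<bar>u + 2 * Im y\<bar>"
    by (simp add: eval_nat_numeral)
  finally have sum_eq: "(\<Sum>c<4. \<bar>Re (Defs.trace (Y * probe_op d (probe_index d i j c)))\<bar>)
      = (\<bar>u + 2 * Re y\<bar> + \<bar>u - 2 * Im y\<bar> + \<bar>u - 2 * Re y\<bar> + \<bar>u + 2 * Im y\<bar>) / (8 * d)" .
  have "4 * \<bar>Re y\<bar> \<le> \<bar>u + 2 * Re y\<bar> + \<bar>u - 2 * Re y\<bar>"
    "4 * \<bar>Im y\<bar> \<le> \<bar>u - 2 * Im y\<bar> + \<bar>u + 2 * Im y\<bar>"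
    by arith+
  then have "4 * cmod y \<le> \<bar>u + 2 * Re y\<bar> + \<bar>u - 2 * Im y\<bar> + \<bar>u - 2 * Re y\<bar> + \<bar>u + 2 * Im y\<bar>"
    using cmod_le[of y] by linarith
  then show ?thesis
    unfolding sum_eq y_def[symmetric] using divide_right_mono[of "4 * cmod y" _ "8 * d"] by simp
qed

lemma entrywise_l1_le_sum_abs_Re_trace_probe_op:
  assumes Y: "hermitian_mat d Y"
  shows "entrywise_l1 Y / (2 * d) \<le> (\<Sum>t<d*d*4. \<bar>Re (Defs.trace (Y * probe_op d t))\<bar>)"
proof -
  have "Y \<in> carrier_mat d d"
    using Y by (simp add: hermitian_mat_def)
  then have "entrywise_l1 Y / (2 * d) = (\<Sum>i<d. \<Sum>j<d. cmod (Y $$ (i,j)) / (2 * d))"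
    by (simp add: entrywise_l1_def sum_divide_distrib)
  also have "\<dots> \<le> (\<Sum>i<d. \<Sum>j<d. \<Sum>c<4. \<bar>Re (Defs.trace (Y * probe_op d (probe_index d i j c)))\<bar>)"
    by (intro sum_mono sum_abs_Re_trace_probe_op_ge[OF Y]) auto
  also have "\<dots> = (\<Sum>t<d*d*4. \<bar>Re (Defs.trace (Y * probe_op d t))\<bar>)"
    by (rule sum_probe_index[symmetric])
  finally show ?thesis .
qed

(* Junk unless sigma is a density operator: embed_pmf needs weights summing to 1. *)
definition probe_dist :: "nat \<Rightarrow> complex mat \<Rightarrow> nat pmf" where
  "probe_dist d \<sigma> = embed_pmf (\<lambda>t. if t < d*d*4 then Re (Defs.trace (\<sigma> * probe_op d t)) else 0)"

lemma pmf_probe_dist: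
  assumes \<sigma>: "density_op d \<sigma>"
  shows "pmf (probe_dist d \<sigma>) t = (if t < d*d*4 then Re (Defs.trace (\<sigma> * probe_op d t)) else 0)"
proof -
  let ?p = "\<lambda>t. if t < d*d*4 then Re (Defs.trace (\<sigma> * probe_op d t)) else 0"
  have Re_nonneg: "0 \<le> Re (Defs.trace (\<sigma> * probe_op d t))" for t
    using \<sigma> trace_mult_probe_op_nonneg by (simp add: density_op_def)
  then have nonneg: "0 \<le> ?p t" for t
    by simp
  have "(\<integral>\<^sup>+ t. ennreal (?p t) \<partial>count_space UNIV) = (\<Sum>t<d*d*4. ennreal (?p t))"
    by (rule nn_integral_count_space') auto
  also have "\<dots> = ennreal (Re (\<Sum>t<d*d*4. Defs.trace (\<sigma> * probe_op d t)))"
    using Re_nonneg by (simp add: sum_ennreal)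
  also have "\<dots> = 1"
    using \<sigma> by (simp add: sum_trace_mult_probe_op density_op_carrier_mat density_op_def)
  finally show ?thesis
    unfolding probe_dist_def by (rule pmf_embed_pmf[OF nonneg])
qed

lemma exists_subset_abs_sum_ge_half:
  fixes r :: "'a \<Rightarrow> real"
  assumes "finite A"
  shows "\<exists>S \<subseteq> A. (\<Sum>x\<in>A. \<bar>r x\<bar>) / 2 \<le> \<bar>\<Sum>x\<in>S. r x\<bar>"
proof -
  define N where "N = A \<inter> {x. r x < 0}"
  define P where "P = A \<inter> - {x. r x < 0}"
  have total: "(\<Sum>x\<in>A. \<bar>r x\<bar>) = (\<Sum>x\<in>P. r x) - (\<Sum>x\<in>N. r x)"
    unfolding N_def P_def using assms by (simp add: abs_if sum.If_cases sum_negf)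
  have signs: "(\<Sum>x\<in>N. r x) \<le> 0" "0 \<le> (\<Sum>x\<in>P. r x)"
    by (auto simp: N_def P_def intro: sum_nonpos sum_nonneg)
  have "N \<subseteq> A" "P \<subseteq> A"
    by (auto simp: N_def P_def)
  moreover have "(\<Sum>x\<in>A. \<bar>r x\<bar>) / 2 \<le> \<bar>\<Sum>x\<in>P. r x\<bar> \<or> (\<Sum>x\<in>A. \<bar>r x\<bar>) / 2 \<le> \<bar>\<Sum>x\<in>N. r x\<bar>"
    using total abs_of_nonpos[OF signs(1)] abs_of_nonneg[OF signs(2)] by linarith
  ultimately show ?thesis
    by blast
qed

lemma probe_dist_separation:
  assumes \<sigma>: "density_op d \<sigma>" and \<rho>: "density_op d \<rho>"
  shows "\<exists>S \<subseteq> {..<d*d*4}. entrywise_l1 (\<sigma> - \<rho>) / (4 * d)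
           \<le> \<bar>measure_pmf.prob (probe_dist d \<sigma>) S - measure_pmf.prob (probe_dist d \<rho>) S\<bar>"
proof -
  define r where "r t = pmf (probe_dist d \<sigma>) t - pmf (probe_dist d \<rho>) t" for t
  have "r t = Re (Defs.trace ((\<sigma> - \<rho>) * probe_op d t))" if "t < d*d*4" for t
    using that \<sigma> \<rho> by (simp add: r_def pmf_probe_dist trace_minus_mult[of _ d d] density_op_carrier_mat)
  moreover have "hermitian_mat d (\<sigma> - \<rho>)"
    using \<sigma> \<rho> by (intro hermitian_mat_minus) (simp_all add: density_op_def psd_mat_def)
  ultimately have "entrywise_l1 (\<sigma> - \<rho>) / (2 * d) \<le> (\<Sum>t<d*d*4. \<bar>r t\<bar>)"
    using entrywise_l1_le_sum_abs_Re_trace_probe_op by simp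
  moreover obtain S where S: "S \<subseteq> {..<d*d*4}" and "(\<Sum>t<d*d*4. \<bar>r t\<bar>) / 2 \<le> \<bar>\<Sum>t\<in>S. r t\<bar>"
    using exists_subset_abs_sum_ge_half[of "{..<d*d*4}" r] by auto
  moreover have "(\<Sum>t\<in>S. r t) = measure_pmf.prob (probe_dist d \<sigma>) S - measure_pmf.prob (probe_dist d \<rho>) S"
    using finite_subset[OF S] by (simp add: r_def sum_subtractf measure_measure_pmf_finite)
  ultimately show ?thesis
    by (intro exI[of _ S]) (auto simp: field_simps)
qed

section \<open>Hoeffding's inequality for two samples\<close>

definition two_sample_pmf :: "nat \<Rightarrow> nat \<Rightarrow> 'a pmf \<Rightarrow> 'a pmf \<Rightarrow> (nat \<Rightarrow> 'a) pmf" where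
  "two_sample_pmf m n P Q = Pi_pmf {..<m+n} undefined (\<lambda>i. if i < m then P else Q)"

definition freq_diff :: "nat \<Rightarrow> nat \<Rightarrow> 'a set \<Rightarrow> (nat \<Rightarrow> 'a) \<Rightarrow> real" where
  "freq_diff m n S x = (\<Sum>i<m. indicator S (x i)) / m - (\<Sum>i\<in>{m..<m+n}. indicator S (x i)) / n"

lemma expectation_two_sample_pmf_component:
  fixes f :: "'a \<Rightarrow> real"
  assumes "i < m + n"
  shows "measure_pmf.expectation (two_sample_pmf m n P Q) (\<lambda>x. f (x i))
       = measure_pmf.expectation (if i < m then P else Q) f"
proof -
  have "measure_pmf.expectation (two_sample_pmf m n P Q) (\<lambda>x. f (x i))
      = measure_pmf.expectation (map_pmf (\<lambda>x. x i) (two_sample_pmf m n P Q)) f"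
    by (simp only: integral_map_pmf)
  also have "map_pmf (\<lambda>x. x i) (two_sample_pmf m n P Q) = (if i < m then P else Q)"
    using assms by (simp add: two_sample_pmf_def Pi_pmf_component)
  finally show ?thesis .
qed

lemma min_le_harmonic_mean:
  assumes "0 < m" "0 < n"
  shows "real (min m n) \<le> 2 / (1 / real m + 1 / real n)"
proof -
  have "1 / real m \<le> 1 / real (min m n)" "1 / real n \<le> 1 / real (min m n)"
    using assms by (simp_all add: frac_le)
  then have "real (min m n) * (1 / real m + 1 / real n) \<le> real (min m n) * (2 / real (min m n))"
    by (intro mult_left_mono) simp_all
  then show ?thesis
    using assms by (simp add: le_divide_eq add_pos_pos)
qed

lemma two_sample_hoeffding:
  fixes P Q :: "'a pmf"
  assumes m: "0 < m" and n: "0 < n" and \<epsilon>: "0 \<le> \<epsilon>"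
  shows "measure_pmf.prob (two_sample_pmf m n P Q)
           {x. \<epsilon> \<le> \<bar>freq_diff m n S x - (measure_pmf.prob P S - measure_pmf.prob Q S)\<bar>}
         \<le> 2 * exp (- (\<epsilon>\<^sup>2 * real (min m n)))"
proof -
  define w where "w i = (if i < m then 1 / real m else - 1 / real n)" for i
  define X where "X = (\<lambda>i (x :: nat \<Rightarrow> 'a). w i * indicator S (x i))"
  define a where "a i = min 0 (w i)" for i
  define b where "b i = max 0 (w i)" for i
  define \<mu> where "\<mu> = (\<Sum>i<m+n. measure_pmf.expectation (two_sample_pmf m n P Q) (X i))"
  have split: "(\<Sum>i<m+n. f i) = (\<Sum>i<m. f i) + (\<Sum>i\<in>{m..<m+n}. f i)" for f :: "nat \<Rightarrow> real"
    using sum.atLeastLessThan_concat[of 0 m "m+n" f] by (simp add: atLeast0LessThan)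
  have "prob_space.indep_vars (measure_pmf (two_sample_pmf m n P Q)) (\<lambda>_. borel) X {..<m+n}"
    using prob_space.indep_vars_compose2[OF measure_pmf.prob_space_axioms
        indep_vars_Pi_pmf[of "{..<m+n}" undefined "\<lambda>i. if i < m then P else Q"],
        of "\<lambda>i v. w i * indicator S v" "\<lambda>_. borel"]
    by (simp add: two_sample_pmf_def X_def)
  then interpret Hoeffding_ineq "measure_pmf (two_sample_pmf m n P Q)" "{..<m+n}" X a b \<mu>
  proof unfold_locales
    show "AE x in measure_pmf (two_sample_pmf m n P Q). X i x \<in> {a i..b i}" for i
      by (intro AE_I2) (simp add: X_def a_def b_def split: split_indicator)
  qed (simp_all add: \<mu>_def)
  have "measure_pmf.expectation (two_sample_pmf m n P Q) (X i)
      = w i * measure_pmf.prob (if i < m then P else Q) S" if "i < m + n" for i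
    using expectation_two_sample_pmf_component[OF that, of P Q "\<lambda>v. w i * indicator S v"]
    by (simp add: X_def)
  then have "\<mu> = (\<Sum>i<m+n. w i * measure_pmf.prob (if i < m then P else Q) S)"
    unfolding \<mu>_def by (intro sum.cong) simp_all
  also have "\<dots> = measure_pmf.prob P S - measure_pmf.prob Q S"
    using m n by (simp add: split w_def)
  finally have mu: "\<mu> = measure_pmf.prob P S - measure_pmf.prob Q S" .
  have "(b i - a i)\<^sup>2 = (if i < m then 1 / real m ^ 2 else 1 / real n ^ 2)" for i
    by (simp add: a_def b_def w_def power_divide)
  then have sum_sq: "(\<Sum>i<m+n. (b i - a i)\<^sup>2) = 1 / real m + 1 / real n"
    using m n by (simp add: split power2_eq_square)
  then have "0 < (\<Sum>i<m+n. (b i - a i)\<^sup>2)"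
    using m n by (simp add: add_pos_pos)
  from Hoeffding_ineq_abs_ge[OF \<epsilon> this]
  have "measure_pmf.prob (two_sample_pmf m n P Q) {x. \<epsilon> \<le> \<bar>(\<Sum>i<m+n. X i x) - \<mu>\<bar>}
      \<le> 2 * exp (- (\<epsilon>\<^sup>2 * (2 / (1 / real m + 1 / real n))))"
    unfolding sum_sq by (simp add: ac_simps)
  also have "\<dots> \<le> 2 * exp (- (\<epsilon>\<^sup>2 * real (min m n)))"
    using mult_left_mono[OF min_le_harmonic_mean[OF m n], of "\<epsilon>\<^sup>2"] by simp
  finally have bound: "measure_pmf.prob (two_sample_pmf m n P Q) {x. \<epsilon> \<le> \<bar>(\<Sum>i<m+n. X i x) - \<mu>\<bar>}
      \<le> 2 * exp (- (\<epsilon>\<^sup>2 * real (min m n)))" .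
  have "(\<Sum>i<m+n. X i x) = freq_diff m n S x" for x
    by (simp add: split X_def w_def freq_diff_def sum_divide_distrib sum_negf)
  with bound show ?thesis
    by (simp add: mu)
qed

section \<open>The test\<close>

(* The 2^(4d^2) sets of outcomes in the union bound, times the factor 2 of the two-sided
   Hoeffding bound. *)
definition test_level :: "nat \<Rightarrow> real \<Rightarrow> real" where
  "test_level d \<alpha> = ln (2 ^ (d*d*4 + 1) / \<alpha>)"

definition threshold :: "nat \<Rightarrow> real \<Rightarrow> nat \<Rightarrow> nat \<Rightarrow> real" where
  "threshold d \<alpha> m n = sqrt (test_level d \<alpha> / real (min m n))"

definition accept_H0 :: "nat \<Rightarrow> real \<Rightarrow> nat \<Rightarrow> nat \<Rightarrow> (nat \<Rightarrow> nat) \<Rightarrow> real" where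
  "accept_H0 d \<alpha> m n x = of_bool (\<forall>S \<subseteq> {..<d*d*4}. \<bar>freq_diff m n S x\<bar> \<le> threshold d \<alpha> m n)"

definition probe_test :: "nat \<Rightarrow> real \<Rightarrow> nat \<Rightarrow> nat \<Rightarrow> indep_rule" where
  "probe_test d \<alpha> m n = ((\<lambda>_. probe_povm d), accept_H0 d \<alpha> m n)"

lemma test_level_nonneg:
  assumes "0 < \<alpha>" "\<alpha> \<le> 1"
  shows "0 \<le> test_level d \<alpha>"
proof -
  have "(1::real) \<le> 2 ^ (d*d*4 + 1)"
    by (rule one_le_power) simp
  then show ?thesis
    using assms by (simp add: test_level_def le_divide_eq order_trans)
qed

lemma valid_indep_rule_probe_test:
  "1 \<le> d \<Longrightarrow> valid_indep_rule d N (probe_test d \<alpha> m n)"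
  by (simp add: valid_indep_rule_def probe_test_def accept_H0_def povm_probe_povm)

lemma outcome_prob_probe_test:
  assumes \<sigma>: "density_op d \<sigma>" and \<rho>: "density_op d \<rho>"
    and x: "x \<in> outcomes (m+n) (fst (probe_test d \<alpha> m n))"
  shows "outcome_prob m n (probe_test d \<alpha> m n) \<sigma> \<rho> x
       = pmf (two_sample_pmf m n (probe_dist d \<sigma>) (probe_dist d \<rho>)) x"
proof -
  have x': "x \<in> Pi\<^sub>E {..<m+n} (\<lambda>_. {..<d*d*4})"
    using x by (simp add: outcomes_def probe_test_def)
  then have "\<forall>i. i \<notin> {..<m+n} \<longrightarrow> x i = undefined"
    by (auto simp: PiE_def extensional_def)
  then have "pmf (two_sample_pmf m n (probe_dist d \<sigma>) (probe_dist d \<rho>)) x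
      = (\<Prod>i<m+n. pmf (if i < m then probe_dist d \<sigma> else probe_dist d \<rho>) (x i))"
    by (simp add: two_sample_pmf_def pmf_Pi)
  also have "\<dots> = outcome_prob m n (probe_test d \<alpha> m n) \<sigma> \<rho> x"
    unfolding outcome_prob_def using x'
    by (intro prod.cong) (auto simp: pmf_probe_dist[OF \<sigma>] pmf_probe_dist[OF \<rho>] copy_state_def
        probe_test_def probe_povm_def)
  finally show ?thesis ..
qed

lemma finite_outcomes_probe_test: "finite (outcomes N (fst (probe_test d \<alpha> m n)))"
  by (auto simp: outcomes_def probe_test_def intro!: finite_PiE)

lemma sum_le_measure_pmf:
  assumes "finite A" "\<And>x. x \<in> A \<Longrightarrow> 0 \<le> g x \<and> g x \<le> 1" "\<And>x. x \<in> A \<Longrightarrow> g x \<noteq> 0 \<Longrightarrow> x \<in> B"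
  shows "(\<Sum>x\<in>A. g x * pmf p x) \<le> measure_pmf.prob p B"
proof -
  have "(\<Sum>x\<in>A. g x * pmf p x) \<le> (\<Sum>x\<in>A. if x \<in> B then pmf p x else 0)"
  proof (rule sum_mono)
    fix x assume "x \<in> A"
    then show "g x * pmf p x \<le> (if x \<in> B then pmf p x else 0)"
      using assms(2,3) by (cases "g x = 0") (auto intro: mult_left_le_one_le)
  qed
  also have "\<dots> = (\<Sum>x\<in>A \<inter> B. pmf p x)"
    using assms(1) by (simp add: sum.inter_restrict)
  also have "\<dots> = measure_pmf.prob p (A \<inter> B)"
    using assms(1) by (simp add: measure_measure_pmf_finite)
  also have "\<dots> \<le> measure_pmf.prob p B"
    by (rule measure_pmf.finite_measure_mono) auto
  finally show ?thesis .
qed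

lemma prob_H0_probe_test_le:
  assumes \<sigma>: "density_op d \<sigma>" and \<rho>: "density_op d \<rho>"
  shows "prob_H0 m n (probe_test d \<alpha> m n) \<sigma> \<rho>
       \<le> measure_pmf.prob (two_sample_pmf m n (probe_dist d \<sigma>) (probe_dist d \<rho>))
            {x. \<forall>S \<subseteq> {..<d*d*4}. \<bar>freq_diff m n S x\<bar> \<le> threshold d \<alpha> m n}"
proof -
  have "prob_H0 m n (probe_test d \<alpha> m n) \<sigma> \<rho> = (\<Sum>x\<in>outcomes (m+n) (fst (probe_test d \<alpha> m n)).
      accept_H0 d \<alpha> m n x * pmf (two_sample_pmf m n (probe_dist d \<sigma>) (probe_dist d \<rho>)) x)"
    unfolding prob_H0_def
    by (intro sum.cong refl) (simp only: outcome_prob_probe_test[OF \<sigma> \<rho>], simp add: probe_test_def)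
  also have "\<dots> \<le> measure_pmf.prob (two_sample_pmf m n (probe_dist d \<sigma>) (probe_dist d \<rho>))
            {x. \<forall>S \<subseteq> {..<d*d*4}. \<bar>freq_diff m n S x\<bar> \<le> threshold d \<alpha> m n}"
    by (rule sum_le_measure_pmf[OF finite_outcomes_probe_test]) (auto simp: accept_H0_def)
  finally show ?thesis .
qed

lemma prob_H1_probe_test_le:
  assumes \<sigma>: "density_op d \<sigma>" and \<rho>: "density_op d \<rho>"
  shows "prob_H1 m n (probe_test d \<alpha> m n) \<sigma> \<rho>
       \<le> measure_pmf.prob (two_sample_pmf m n (probe_dist d \<sigma>) (probe_dist d \<rho>))
            {x. \<exists>S \<subseteq> {..<d*d*4}. threshold d \<alpha> m n < \<bar>freq_diff m n S x\<bar>}"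
proof -
  have "prob_H1 m n (probe_test d \<alpha> m n) \<sigma> \<rho> = (\<Sum>x\<in>outcomes (m+n) (fst (probe_test d \<alpha> m n)).
      (1 - accept_H0 d \<alpha> m n x) * pmf (two_sample_pmf m n (probe_dist d \<sigma>) (probe_dist d \<rho>)) x)"
    unfolding prob_H1_def
    by (intro sum.cong refl) (simp only: outcome_prob_probe_test[OF \<sigma> \<rho>], simp add: probe_test_def)
  also have "\<dots> \<le> measure_pmf.prob (two_sample_pmf m n (probe_dist d \<sigma>) (probe_dist d \<rho>))
            {x. \<exists>S \<subseteq> {..<d*d*4}. threshold d \<alpha> m n < \<bar>freq_diff m n S x\<bar>}"
    by (rule sum_le_measure_pmf[OF finite_outcomes_probe_test]) (auto simp: accept_H0_def not_le)
  finally show ?thesis .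
qed

lemma probe_test_type_I_error:
  assumes \<alpha>: "0 < \<alpha>" "\<alpha> \<le> 1" and \<rho>: "density_op d \<rho>" and m: "0 < m" and n: "0 < n"
  shows "prob_H1 m n (probe_test d \<alpha> m n) \<rho> \<rho> \<le> \<alpha>"
proof -
  let ?P = "two_sample_pmf m n (probe_dist d \<rho>) (probe_dist d \<rho>)"
  let ?thr = "threshold d \<alpha> m n"
  define E where "E S = {x. ?thr \<le> \<bar>freq_diff m n S x
      - (measure_pmf.prob (probe_dist d \<rho>) S - measure_pmf.prob (probe_dist d \<rho>) S)\<bar>}" for S
  have "prob_H1 m n (probe_test d \<alpha> m n) \<rho> \<rho> \<le> measure_pmf.prob ?P (\<Union>S \<in> Pow {..<d*d*4}. E S)"
    using prob_H1_probe_test_le[OF \<rho> \<rho>]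
    by (rule order_trans) (intro measure_pmf.finite_measure_mono, auto simp: E_def)
  also have "\<dots> \<le> (\<Sum>S \<in> Pow {..<d*d*4}. measure_pmf.prob ?P (E S))"
    by (rule measure_pmf.finite_measure_subadditive_finite) auto
  also have "\<dots> \<le> (\<Sum>S \<in> Pow {..<d*d*4}. 2 * exp (- (?thr\<^sup>2 * real (min m n))))"
    unfolding E_def using test_level_nonneg[OF \<alpha>]
    by (intro sum_mono two_sample_hoeffding m n) (simp add: threshold_def)
  also have "?thr\<^sup>2 * real (min m n) = test_level d \<alpha>"
    using m n test_level_nonneg[OF \<alpha>] by (simp add: threshold_def)
  also have "exp (- test_level d \<alpha>) = \<alpha> / 2 ^ (d*d*4 + 1)"
    using \<alpha> by (simp add: test_level_def exp_minus)
  finally show ?thesis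
    by (simp add: card_Pow)
qed

lemma two_exp_shifted_square_le:
  fixes \<Delta> L k :: real
  assumes "0 \<le> \<Delta>" "0 \<le> L" "1 \<le> k"
  shows "2 * exp (- ((\<Delta> - sqrt (L / k))\<^sup>2 * k)) \<le> exp (- k * \<Delta>\<^sup>2 + (ln 2 + 2 * \<Delta> * sqrt L) * sqrt k)"
proof -
  have "sqrt (L / k) * k = sqrt L * sqrt k"
    using assms by (simp add: real_sqrt_divide field_simps)
  moreover have "(\<Delta> - sqrt (L / k))\<^sup>2 * k = k * \<Delta>\<^sup>2 - 2 * \<Delta> * (sqrt (L / k) * k) + (sqrt (L / k))\<^sup>2 * k"
    by (simp add: power2_eq_square algebra_simps)
  moreover have "0 \<le> (sqrt (L / k))\<^sup>2 * k"
    using assms by simp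
  ultimately have "k * \<Delta>\<^sup>2 - 2 * \<Delta> * sqrt L * sqrt k \<le> (\<Delta> - sqrt (L / k))\<^sup>2 * k"
    by (simp add: mult.assoc)
  moreover have "ln 2 \<le> ln 2 * sqrt k"
    using assms by simp
  ultimately have "ln 2 + - ((\<Delta> - sqrt (L / k))\<^sup>2 * k) \<le> - k * \<Delta>\<^sup>2 + (ln 2 + 2 * \<Delta> * sqrt L) * sqrt k"
    by (simp only: distrib_right)
  moreover have "2 * exp x = exp (ln 2 + x)" for x :: real
    by (simp add: exp_add)
  ultimately show ?thesis
    by simp
qed

lemma prob_H0_probe_test_le_separated:
  assumes \<sigma>: "density_op d \<sigma>" and \<rho>: "density_op d \<rho>" and mn: "0 < m" "0 < n"
    and S: "S \<subseteq> {..<d*d*4}"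
    and sep: "\<Delta> \<le> \<bar>measure_pmf.prob (probe_dist d \<sigma>) S - measure_pmf.prob (probe_dist d \<rho>) S\<bar>"
    and thr: "threshold d \<alpha> m n \<le> \<Delta>"
  shows "prob_H0 m n (probe_test d \<alpha> m n) \<sigma> \<rho>
       \<le> 2 * exp (- ((\<Delta> - threshold d \<alpha> m n)\<^sup>2 * real (min m n)))"
proof -
  let ?P = "two_sample_pmf m n (probe_dist d \<sigma>) (probe_dist d \<rho>)"
  define \<mu> where "\<mu> = measure_pmf.prob (probe_dist d \<sigma>) S - measure_pmf.prob (probe_dist d \<rho>) S"
  have "prob_H0 m n (probe_test d \<alpha> m n) \<sigma> \<rho>
      \<le> measure_pmf.prob ?P {x. \<forall>S \<subseteq> {..<d*d*4}. \<bar>freq_diff m n S x\<bar> \<le> threshold d \<alpha> m n}"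
    by (rule prob_H0_probe_test_le[OF \<sigma> \<rho>])
  also have "\<dots> \<le> measure_pmf.prob ?P {x. \<Delta> - threshold d \<alpha> m n \<le> \<bar>freq_diff m n S x - \<mu>\<bar>}"
    using S sep unfolding \<mu>_def by (intro measure_pmf.finite_measure_mono) auto
  also have "\<dots> \<le> 2 * exp (- ((\<Delta> - threshold d \<alpha> m n)\<^sup>2 * real (min m n)))"
    unfolding \<mu>_def using thr by (intro two_sample_hoeffding mn) simp
  finally show ?thesis .
qed

lemma probe_test_type_II_error_entrywise_l1:
  assumes \<alpha>: "0 < \<alpha>" "\<alpha> \<le> 1" and \<sigma>: "density_op d \<sigma>" and \<rho>: "density_op d \<rho>"
  defines "\<Delta> \<equiv> entrywise_l1 (\<sigma> - \<rho>) / (4 * d)"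
  shows "\<exists>K N. \<forall>m n. N \<le> m \<longrightarrow> N \<le> n \<longrightarrow>
           prob_H0 m n (probe_test d \<alpha> m n) \<sigma> \<rho> \<le> exp (- real (min m n) * \<Delta>\<^sup>2 + K * sqrt (real (min m n)))"
proof -
  define L where "L = test_level d \<alpha>"
  define K where "K = ln 2 + 2 * \<Delta> * sqrt L"
  have L: "0 \<le> L"
    unfolding L_def using \<alpha> by (rule test_level_nonneg)
  have "0 \<le> \<Delta>"
    unfolding \<Delta>_def using entrywise_l1_nonneg by simp
  show ?thesis
  proof (cases "\<Delta> = 0")
    case True
    have "prob_H0 m n (probe_test d \<alpha> m n) \<sigma> \<rho> \<le> exp (- real (min m n) * \<Delta>\<^sup>2 + K * sqrt (real (min m n)))"
      for m n
    proof -
      have "prob_H0 m n (probe_test d \<alpha> m n) \<sigma> \<rho> \<le> 1"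
        using prob_H0_probe_test_le[OF \<sigma> \<rho>] measure_pmf.prob_le_1 order_trans by blast
      also have "1 \<le> exp (- real (min m n) * \<Delta>\<^sup>2 + K * sqrt (real (min m n)))"
        using True by (simp add: K_def)
      finally show ?thesis .
    qed
    then show ?thesis
      by blast
  next
    case False
    with \<open>0 \<le> \<Delta>\<close> have \<Delta>: "0 < \<Delta>"
      by simp
    obtain S where S: "S \<subseteq> {..<d*d*4}"
      and sep: "\<Delta> \<le> \<bar>measure_pmf.prob (probe_dist d \<sigma>) S - measure_pmf.prob (probe_dist d \<rho>) S\<bar>"
      using probe_dist_separation[OF \<sigma> \<rho>] unfolding \<Delta>_def by blast
    define N where "N = nat \<lceil>L / \<Delta>\<^sup>2\<rceil> + 1"
    have "prob_H0 m n (probe_test d \<alpha> m n) \<sigma> \<rho> \<le> exp (- real (min m n) * \<Delta>\<^sup>2 + K * sqrt (real (min m n)))"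
      if "N \<le> m" "N \<le> n" for m n
    proof -
      define k where "k = real (min m n)"
      have mn: "0 < m" "0 < n" and "L / \<Delta>\<^sup>2 < k"
        using that unfolding N_def k_def by linarith+
      then have "L / k < \<Delta>\<^sup>2"
        using \<Delta> by (simp add: k_def field_simps)
      then have thr: "threshold d \<alpha> m n < \<Delta>"
        using real_sqrt_less_mono \<Delta> by (fastforce simp: threshold_def L_def k_def)
      have "prob_H0 m n (probe_test d \<alpha> m n) \<sigma> \<rho> \<le> 2 * exp (- ((\<Delta> - threshold d \<alpha> m n)\<^sup>2 * k))"
        unfolding k_def using thr by (intro prob_H0_probe_test_le_separated[OF \<sigma> \<rho> mn S sep]) simp
      also have "\<dots> \<le> exp (- k * \<Delta>\<^sup>2 + K * sqrt k)"
        unfolding threshold_def L_def[symmetric] k_def[symmetric] K_def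
        using \<open>0 \<le> \<Delta>\<close> L mn by (intro two_exp_shifted_square_le) (auto simp: k_def)
      finally show ?thesis
        unfolding k_def .
    qed
    then show ?thesis
      by blast
  qed
qed

lemma probe_test_type_II_error:
  assumes d: "1 \<le> d" and \<alpha>: "0 < \<alpha>" "\<alpha> \<le> 1" and \<sigma>: "density_op d \<sigma>" and \<rho>: "density_op d \<rho>"
  shows "\<exists>K N. \<forall>m n. N \<le> m \<longrightarrow> N \<le> n \<longrightarrow> prob_H0 m n (probe_test d \<alpha> m n) \<sigma> \<rho>
           \<le> exp (- real (min m n) * (trace_norm (\<rho> - \<sigma>))\<^sup>2 / (344 * real d ^ 3) + K * sqrt (real (min m n)))"
proof -
  define \<Delta> where "\<Delta> = entrywise_l1 (\<sigma> - \<rho>) / (4 * d)"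
  have "(trace_norm (\<rho> - \<sigma>))\<^sup>2 \<le> real d * (entrywise_l1 (\<sigma> - \<rho>))\<^sup>2"
    using trace_norm_power2_le_entrywise_l1[of "\<rho> - \<sigma>" d] entrywise_l1_minus_commute[of \<rho> d \<sigma>]
      \<sigma> \<rho> by (simp add: density_op_carrier_mat minus_carrier_mat)
  also have "\<dots> = 16 * real d ^ 3 * \<Delta>\<^sup>2"
    using d by (simp add: \<Delta>_def power2_eq_square power3_eq_cube)
  also have "\<dots> \<le> 344 * real d ^ 3 * \<Delta>\<^sup>2"
    by (intro mult_right_mono) auto
  finally have trace_norm_le: "(trace_norm (\<rho> - \<sigma>))\<^sup>2 \<le> 344 * real d ^ 3 * \<Delta>\<^sup>2" .
  have exponent_le: "- real k * \<Delta>\<^sup>2 \<le> - real k * (trace_norm (\<rho> - \<sigma>))\<^sup>2 / (344 * real d ^ 3)" for k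
    using mult_left_mono[OF trace_norm_le, of "real k"] d by (simp add: divide_le_eq mult_ac)
  obtain K N where KN: "\<And>m n. N \<le> m \<Longrightarrow> N \<le> n \<Longrightarrow> prob_H0 m n (probe_test d \<alpha> m n) \<sigma> \<rho>
      \<le> exp (- real (min m n) * \<Delta>\<^sup>2 + K * sqrt (real (min m n)))"
    using probe_test_type_II_error_entrywise_l1[OF \<alpha> \<sigma> \<rho>] unfolding \<Delta>_def[symmetric] by blast
  have "prob_H0 m n (probe_test d \<alpha> m n) \<sigma> \<rho>
      \<le> exp (- real (min m n) * (trace_norm (\<rho> - \<sigma>))\<^sup>2 / (344 * real d ^ 3) + K * sqrt (real (min m n)))"
    if "N \<le> m" "N \<le> n" for m n
    using KN[OF that] exponent_le[of "min m n"] by (simp add: order_trans)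
  then show ?thesis
    by blast
qed

theorem theorem5:
  fixes d :: nat and \<alpha> :: real
  assumes "d \<ge> 1" and "0 < \<alpha>" and "\<alpha> < 1"
  shows "\<exists>M :: nat \<Rightarrow> nat \<Rightarrow> indep_rule.
     (\<forall>m n. valid_indep_rule d (m+n) (M m n)) \<and>
     (\<forall>C::real. C \<ge> 1 \<longrightarrow>
        (\<exists>N0. \<forall>m n. N0 \<le> m \<longrightarrow> N0 \<le> n \<longrightarrow> real m \<le> C * real n \<longrightarrow> real n \<le> C * real m \<longrightarrow>
            (\<forall>\<rho>. density_op d \<rho> \<longrightarrow> prob_H1 m n (M m n) \<rho> \<rho> \<le> \<alpha>)) \<and>
        (\<forall>\<rho> \<sigma>. density_op d \<rho> \<longrightarrow> density_op d \<sigma> \<longrightarrow> \<rho> \<noteq> \<sigma> \<longrightarrow>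
           (\<exists>K::real. \<exists>N1. \<forall>m n. N1 \<le> m \<longrightarrow> N1 \<le> n \<longrightarrow>
              real m \<le> C * real n \<longrightarrow> real n \<le> C * real m \<longrightarrow>
              prob_H0 m n (M m n) \<sigma> \<rho> \<le>
                exp (- real (min m n) * (trace_norm (\<rho> - \<sigma>))\<^sup>2 / (344 * real d ^ 3)
                     + K * sqrt (real (min m n))))))"
proof (intro exI[of _ "probe_test d \<alpha>"] conjI allI impI)
  have \<alpha>: "0 < \<alpha>" "\<alpha> \<le> 1"
    using assms by simp_all
  show "valid_indep_rule d (m+n) (probe_test d \<alpha> m n)" for m n
    using assms(1) by (rule valid_indep_rule_probe_test)
  show "\<exists>N0. \<forall>m n. N0 \<le> m \<longrightarrow> N0 \<le> n \<longrightarrow> real m \<le> C * real n \<longrightarrow> real n \<le> C * real m \<longrightarrow>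
          (\<forall>\<rho>. density_op d \<rho> \<longrightarrow> prob_H1 m n (probe_test d \<alpha> m n) \<rho> \<rho> \<le> \<alpha>)" for C
    using probe_test_type_I_error[OF \<alpha>] by (intro exI[of _ 1]) auto
  show "\<exists>K N1. \<forall>m n. N1 \<le> m \<longrightarrow> N1 \<le> n \<longrightarrow> real m \<le> C * real n \<longrightarrow> real n \<le> C * real m \<longrightarrow>
          prob_H0 m n (probe_test d \<alpha> m n) \<sigma> \<rho>
          \<le> exp (- real (min m n) * (trace_norm (\<rho> - \<sigma>))\<^sup>2 / (344 * real d ^ 3) + K * sqrt (real (min m n)))"
    if "density_op d \<rho>" "density_op d \<sigma>" for C \<rho> \<sigma>
    using probe_test_type_II_error[OF assms(1) \<alpha> that(2,1)] by blast
qed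

end
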